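(* Let $n\ge2$, let $\alpha=(\alpha_1,\dots,\alpha_n)^T\in\mathbb{R}^n$ with $\alpha_1>\alpha_2>\cdots>\alpha_n$, and let $A=(a_{ij})$ be a real $n\times n$ matrix such that $AP\alpha\sim A\alpha$ for every $P\in\mathbf{P}_n$. Then all column sums of $A$ are equal: $\sum_{l=1}^n a_{ls}=\sum_{l=1}^n a_{lt}$ for all $1\le s,t\le n$.
   Context: For $x,y\in\mathbb{R}^n$, $x\prec y$ means $x=Dy$ for some $n\times n$ doubly stochastic matrix $D$; $x\sim y$ means $x\prec y$ and $y\prec x$. $\mathbf{P}_n$ is the set of $n\times n$ permutation matrices. *)

theory Defs
  imports "HOL-Analysis.Analysis" "HOL-Combinatorics.Permutations"
begin

definition doubly_stochastic :: "real^'n^'n \<Rightarrow> bool" where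
  "doubly_stochastic D \<longleftrightarrow>
     (\<forall>i j. D $ i $ j \<ge> 0) \<and>
     (\<forall>i. (\<Sum>j\<in>UNIV. D $ i $ j) = 1) \<and>
     (\<forall>j. (\<Sum>i\<in>UNIV. D $ i $ j) = 1)"

definition majorized_by :: "real^'n \<Rightarrow> real^'n \<Rightarrow> bool" (infix "\<prec>\<^sub>m" 50) where
  "x \<prec>\<^sub>m y \<longleftrightarrow> (\<exists>D. doubly_stochastic D \<and> x = D *v y)"

definition maj_equiv :: "real^'n \<Rightarrow> real^'n \<Rightarrow> bool" (infix "\<sim>\<^sub>m" 50) where
  "x \<sim>\<^sub>m y \<longleftrightarrow> x \<prec>\<^sub>m y \<and> y \<prec>\<^sub>m x"

definition perm_matrix :: "('n \<Rightarrow> 'n) \<Rightarrow> real^'n^'n" where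
  "perm_matrix p = (\<chi> i j. if i = p j then 1 else 0)"

definition perm_matrices :: "(real^'n^'n) set" where
  "perm_matrices = {perm_matrix p | p. p permutes (UNIV :: 'n set)}"

end

theory Submission
  imports Defs
begin

text \<open>A doubly stochastic matrix preserves the sum of the entries of a vector, hence so does
  majorization. The entry sum of \<open>A P \<alpha>\<close> is \<open>\<Sum>j. c (p j) * \<alpha> j\<close>, where c are the column sums
  of A and P is the matrix of p. Taking p the transposition of s and t, comparison with \<open>A \<alpha>\<close>
  leaves \<open>(c t - c s) * (\<alpha> s - \<alpha> t) = 0\<close>, and the entries of \<open>\<alpha>\<close> are distinct.\<close>

lemma sum_matrix_vector_mult:
  fixes M :: "real^'n^'m" and x :: "real^'n"
  shows "(\<Sum>i\<in>UNIV. (M *v x) $ i) = (\<Sum>j\<in>UNIV. (\<Sum>i\<in>UNIV. M $ i $ j) * x $ j)"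
proof -
  have "(\<Sum>i\<in>UNIV. (M *v x) $ i) = (\<Sum>i\<in>UNIV. \<Sum>j\<in>UNIV. M $ i $ j * x $ j)"
    by (simp add: matrix_vector_mult_def)
  also have "\<dots> = (\<Sum>j\<in>UNIV. \<Sum>i\<in>UNIV. M $ i $ j * x $ j)"
    by (rule sum.swap)
  finally show ?thesis
    by (simp add: sum_distrib_right)
qed

lemma sum_doubly_stochastic_mult:
  fixes D :: "real^'n^'n" and y :: "real^'n"
  assumes "doubly_stochastic D"
  shows "(\<Sum>i\<in>UNIV. (D *v y) $ i) = (\<Sum>j\<in>UNIV. y $ j)"
  using assms by (simp add: sum_matrix_vector_mult doubly_stochastic_def)

lemma majorized_by_sum_eq:
  assumes "x \<prec>\<^sub>m y"
  shows "(\<Sum>i\<in>UNIV. x $ i) = (\<Sum>i\<in>UNIV. y $ i)"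
  using assms sum_doubly_stochastic_mult by (auto simp: majorized_by_def)

lemma matrix_mul_perm_matrix_nth:
  fixes A :: "real^'n^'m"
  shows "(A ** perm_matrix p) $ l $ j = A $ l $ p j"
proof -
  have "(A ** perm_matrix p) $ l $ j = (\<Sum>k\<in>UNIV. A $ l $ k * (if k = p j then 1 else 0))"
    by (simp add: matrix_matrix_mult_def perm_matrix_def)
  also have "\<dots> = A $ l $ p j"
    by (simp add: if_distrib cong: if_cong)
  finally show ?thesis .
qed

lemma perm_matrix_id: "perm_matrix id = mat 1"
  by (simp add: perm_matrix_def mat_def)

lemma weighted_sum_transpose_eq_imp_eq:
  fixes c x :: "'a::finite \<Rightarrow> real"
  assumes sums: "(\<Sum>j\<in>UNIV. c (Transposition.transpose s t j) * x j) = (\<Sum>j\<in>UNIV. c j * x j)"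
    and "x s \<noteq> x t"
  shows "c s = c t"
proof (cases "s = t")
  case False
  let ?f = "\<lambda>j. (c (Transposition.transpose s t j) - c j) * x j"
  have "(\<Sum>j\<in>UNIV. ?f j) = 0"
    using sums by (simp add: left_diff_distrib sum_subtractf)
  moreover have "(\<Sum>j\<in>UNIV. ?f j) = (\<Sum>j\<in>{s, t}. ?f j)"
    by (rule sum.mono_neutral_right) auto
  moreover have "(\<Sum>j\<in>{s, t}. ?f j) = (c t - c s) * (x s - x t)"
    using False by (simp add: algebra_simps)
  ultimately have "(c t - c s) * (x s - x t) = 0"
    by simp
  with \<open>x s \<noteq> x t\<close> show ?thesis
    by simp
qed simp

theorem mainTheorem4:
  fixes \<alpha> :: "(real, 'n::{finite,linorder}) vec" and A :: "((real, 'n) vec, 'n) vec"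
  assumes "CARD('n) \<ge> 2"
    and "\<forall>i j. i < j \<longrightarrow> \<alpha> $ i > \<alpha> $ j"
    and "\<forall>P\<in>perm_matrices. (A ** P) *v \<alpha> \<sim>\<^sub>m A *v \<alpha>"
  shows "\<forall>s t. (\<Sum>l\<in>UNIV. A $ l $ s) = (\<Sum>l\<in>UNIV. A $ l $ t)"
proof (intro allI)
  fix s t :: 'n
  define c where "c k = (\<Sum>l\<in>UNIV. A $ l $ k)" for k
  let ?P = "perm_matrix (Transposition.transpose s t)"
  have "?P \<in> perm_matrices"
    unfolding perm_matrices_def using permutes_swap_id[of s UNIV t] by blast
  with assms(3) have "(A ** ?P) *v \<alpha> \<prec>\<^sub>m (A ** perm_matrix id) *v \<alpha>"
    by (simp add: maj_equiv_def perm_matrix_id)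
  then have "(\<Sum>l\<in>UNIV. ((A ** ?P) *v \<alpha>) $ l) = (\<Sum>l\<in>UNIV. ((A ** perm_matrix id) *v \<alpha>) $ l)"
    by (rule majorized_by_sum_eq)
  then have sums: "(\<Sum>j\<in>UNIV. c (Transposition.transpose s t j) * \<alpha> $ j) = (\<Sum>j\<in>UNIV. c j * \<alpha> $ j)"
    by (simp only: sum_matrix_vector_mult matrix_mul_perm_matrix_nth c_def id_apply)
  show "c s = c t"
  proof (cases "s = t")
    case False
    with assms(2) have "\<alpha> $ s \<noteq> \<alpha> $ t"
      by (metis less_irrefl neq_iff)
    with sums show ?thesis
      by (rule weighted_sum_transpose_eq_imp_eq)
  qed simp
qed

end
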